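(* Let $V,W$ be finite-dimensional real inner product spaces and $L:V\to W$ a linear map. Assume $G:W\to W$ is independent of $\ker L^*$ with respect to the decomposition $W=\ker L^*\oplus\operatorname{im}L^{+*}$, and that $G(W)\subseteq\operatorname{im}L$. Then there exists a function $F:V\to V$ such that $G(x)=LF(L^*x)$ for all $x\in W$; more specifically, $F(y):=L^+G(L^{+*}y)$ is such a function.
   Context: $L^*$ is the adjoint of $L$. The Moore–Penrose pseudoinverse $L^+:W\to V$ is the unique linear map with $LL^+L=L$, $L^+LL^+=L^+$, and $LL^+$, $L^+L$ symmetric positive semi-definite; $L^{+*}$ denotes $(L^+)^*=(L^* )^+$. Given $W=W_1\oplus W_2$, a map $G:W\to W$ is independent of $W_1$ if $G(w_1+w_2)=G(w_2)$ for all $w_1\in W_1,w_2\in W_2$. *)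

theory Defs
  imports "HOL-Analysis.Analysis"
begin

definition sym_psd :: "('a::real_inner \<Rightarrow> 'a) \<Rightarrow> bool" where
  "sym_psd A \<longleftrightarrow> (\<forall>x y. A x \<bullet> y = x \<bullet> A y) \<and> (\<forall>x. 0 \<le> x \<bullet> A x)"

definition is_mp_pinv :: "('v::real_inner \<Rightarrow> 'w::real_inner) \<Rightarrow> ('w \<Rightarrow> 'v) \<Rightarrow> bool" where
  "is_mp_pinv L P \<longleftrightarrow> linear P \<and> L \<circ> P \<circ> L = L \<and> P \<circ> L \<circ> P = P
      \<and> sym_psd (L \<circ> P) \<and> sym_psd (P \<circ> L)"

definition mp_pinv :: "('v::real_inner \<Rightarrow> 'w::real_inner) \<Rightarrow> ('w \<Rightarrow> 'v)" where
  "mp_pinv L = (THE P. is_mp_pinv L P)"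

definition independent_of :: "'w set \<Rightarrow> 'w set \<Rightarrow> ('w::real_vector \<Rightarrow> 'a) \<Rightarrow> bool" where
  "independent_of W1 W2 G \<longleftrightarrow> (\<forall>w1\<in>W1. \<forall>w2\<in>W2. G (w1 + w2) = G w2)"

end

theory Submission
  imports Defs
begin

text \<open>Write \<open>P = L\<^sup>+\<close>. Since \<open>L P\<close> is symmetric, \<open>P\<^sup>* L\<^sup>* = (L P)\<^sup>* = L P\<close>, and
  \<open>x - L P x\<close> lies in \<open>ker L\<^sup>*\<close> because \<open>L P L = L\<close>. So \<open>x = (x - L P x) + P\<^sup>* L\<^sup>* x\<close> splits
  \<open>x\<close> along \<open>ker L\<^sup>* \<oplus> im P\<^sup>*\<close>, and independence gives \<open>G x = G (P\<^sup>* L\<^sup>* x)\<close>. This value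
  lies in \<open>im L\<close>, on which \<open>L P\<close> is the identity. As \<open>mp_pinv\<close> is a definite description,
  existence and uniqueness of a map satisfying the Penrose conditions must be proved first.\<close>

definition orthogonal_projection_onto :: "'a::real_inner set \<Rightarrow> ('a \<Rightarrow> 'a) \<Rightarrow> bool" where
  "orthogonal_projection_onto S p \<longleftrightarrow> (\<forall>x. p x \<in> S) \<and> (\<forall>x. \<forall>s\<in>S. orthogonal (x - p x) s)"

lemma orthogonal_projection_exists:
  fixes S :: "'a::euclidean_space set"
  assumes "subspace S"
  obtains p where "linear p" "orthogonal_projection_onto S p"
proof -
  obtain B where B: "B \<subseteq> S" "pairwise orthogonal B" "span B = S"
    using orthogonal_basis_subspace[OF assms] by metis
  define p where "p x = (\<Sum>b\<in>B. (b \<bullet> x / (b \<bullet> b)) *\<^sub>R b)" for x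
  have "linear p"
    unfolding p_def
    by (intro linearI) (simp_all add: inner_add_right add_divide_distrib scaleR_add_left
        sum.distrib scaleR_sum_right)
  moreover have "p x \<in> S" for x
    unfolding p_def using B(1) assms by (intro subspace_sum subspace_mul) auto
  moreover have "orthogonal (x - p x) s" if "s \<in> S" for x s
    using Gram_Schmidt_step[OF B(2), of s x] that B(3)
    by (simp add: p_def orthogonal_commute)
  ultimately show thesis
    using that unfolding orthogonal_projection_onto_def by blast
qed

lemma orthogonal_projection_fixes:
  assumes "subspace S" "orthogonal_projection_onto S p" "y \<in> S"
  shows "p y = y"
proof -
  have "y - p y \<in> S"
    using assms by (simp add: subspace_diff orthogonal_projection_onto_def)
  then have "orthogonal (y - p y) (y - p y)"
    using assms(2) by (simp add: orthogonal_projection_onto_def)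
  then show ?thesis by (simp add: orthogonal_self)
qed

lemma orthogonal_projection_sym_psd:
  assumes "orthogonal_projection_onto S p"
  shows "sym_psd p"
proof -
  have orth: "(x - p x) \<bullet> p y = 0" for x y
    using assms by (simp add: orthogonal_projection_onto_def orthogonal_def)
  have "p x \<bullet> y = p x \<bullet> p y" for x y
    using orth[of y x] by (simp add: inner_diff_left inner_diff_right inner_commute)
  moreover have "x \<bullet> p y = p x \<bullet> p y" for x y
    using orth[of x y] by (simp add: inner_diff_left)
  moreover have "0 \<le> x \<bullet> p x" for x
    using orth[of x x] by (simp add: inner_diff_left)
  ultimately show ?thesis unfolding sym_psd_def by simp
qed

lemma comp_orthogonal_projection_range_adjoint:
  fixes L :: "'v::euclidean_space \<Rightarrow> 'w::euclidean_space"
  assumes "linear L" "orthogonal_projection_onto (range (adjoint L)) q"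
  shows "L \<circ> q = L"
proof
  fix v
  have "L (v - q v) \<bullet> w = 0" for w
    using assms(2)
    by (simp add: adjoint_clauses(1)[OF assms(1), symmetric] orthogonal_projection_onto_def
        orthogonal_def)
  then have "L (v - q v) = 0"
    by (metis inner_eq_zero_iff)
  then show "(L \<circ> q) v = L v"
    by (simp add: linear_diff[OF assms(1)])
qed

lemma inj_on_range_adjoint:
  fixes L :: "'v::euclidean_space \<Rightarrow> 'w::euclidean_space"
  assumes "linear L"
  shows "inj_on L (range (adjoint L))"
proof (rule inj_onI)
  fix a b
  assume "a \<in> range (adjoint L)" "b \<in> range (adjoint L)" "L a = L b"
  then obtain c d where "a = adjoint L c" "b = adjoint L d" "L (a - b) = 0"
    by (auto simp: linear_diff[OF assms])
  then have "(a - b) \<bullet> (a - b) = 0"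
    by (simp add: inner_diff_left adjoint_clauses(2)[OF assms] linear_diff[OF assms]
        flip: inner_diff_right)
  then show "a = b" by simp
qed

text \<open>With \<open>p\<close> and \<open>q\<close> the orthogonal projections onto \<open>im L\<close> and \<open>im L\<^sup>*\<close>, the pseudoinverse
  is \<open>g \<circ> p\<close> for a linear left inverse \<open>g\<close> of \<open>L\<close> on \<open>im L\<^sup>*\<close>; then \<open>L \<circ> P = p\<close> and
  \<open>P \<circ> L = q\<close>.\<close>

lemma mp_pinv_exists:
  fixes L :: "'v::euclidean_space \<Rightarrow> 'w::euclidean_space"
  assumes lin: "linear L"
  shows "\<exists>P. is_mp_pinv L P"
proof -
  define S where "S = range (adjoint L)"
  have "subspace S"
    unfolding S_def by (simp add: adjoint_linear lin linear_subspace_image)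
  then obtain q where q: "orthogonal_projection_onto S q"
    using orthogonal_projection_exists by blast
  have range_subspace: "subspace (range L)"
    by (simp add: lin linear_subspace_image)
  then obtain p where "linear p" and p: "orthogonal_projection_onto (range L) p"
    using orthogonal_projection_exists by blast
  obtain g where "linear g" and g_range: "\<And>w. g w \<in> S" and g_left: "\<And>v. v \<in> S \<Longrightarrow> g (L v) = v"
    using linear_exists_left_inverse_on[OF lin \<open>subspace S\<close>] inj_on_range_adjoint[OF lin]
    unfolding S_def by blast
  have Lq: "L (q v) = L v" for v
    using comp_orthogonal_projection_range_adjoint[OF lin] q unfolding S_def by (metis comp_apply)
  have gL: "g (L v) = q v" for v
    using g_left[of "q v"] q by (simp add: Lq orthogonal_projection_onto_def)
  define P where "P = g \<circ> p"
  have LP: "L \<circ> P = p"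
  proof
    fix w
    obtain v where "p w = L v"
      using p unfolding orthogonal_projection_onto_def by blast
    then show "(L \<circ> P) w = p w"
      by (simp add: P_def gL Lq)
  qed
  have PL: "P \<circ> L = q"
    by (simp add: fun_eq_iff P_def gL orthogonal_projection_fixes[OF range_subspace p])
  have "linear P"
    unfolding P_def using \<open>linear g\<close> \<open>linear p\<close> by (rule linear_compose[rotated])
  moreover have "L \<circ> P \<circ> L = L"
    by (simp add: LP fun_eq_iff orthogonal_projection_fixes[OF range_subspace p])
  moreover have "P \<circ> L \<circ> P = P"
    unfolding PL
    by (simp add: fun_eq_iff P_def orthogonal_projection_fixes[OF \<open>subspace S\<close> q g_range])
  ultimately have "is_mp_pinv L P"
    unfolding is_mp_pinv_def LP PL
    by (simp add: orthogonal_projection_sym_psd[OF p] orthogonal_projection_sym_psd[OF q])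
  then show ?thesis by blast
qed

lemma symmetric_eq_of_same_range:
  fixes A B :: "'a::real_inner \<Rightarrow> 'a"
  assumes "\<And>x y. A x \<bullet> y = x \<bullet> A y" "\<And>x y. B x \<bullet> y = x \<bullet> B y"
    and "\<And>x. B (A x) = A x" "\<And>x. A (B x) = B x"
  shows "A = B"
proof
  fix x
  have "A x \<bullet> y = B x \<bullet> y" for y
  proof -
    have "A x \<bullet> y = B (A x) \<bullet> y" by (simp add: assms(3))
    also have "\<dots> = x \<bullet> A (B y)" by (simp add: assms(1,2))
    also have "\<dots> = B x \<bullet> y" by (simp add: assms(2,4))
    finally show ?thesis .
  qed
  then show "A x = B x"
    by (metis vector_eq_rdot)
qed

lemma symmetric_eq_of_same_kernel:
  fixes A B :: "'a::real_inner \<Rightarrow> 'a"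
  assumes "\<And>x y. A x \<bullet> y = x \<bullet> A y" "\<And>x y. B x \<bullet> y = x \<bullet> B y"
    and "\<And>x. A (B x) = A x" "\<And>x. B (A x) = B x"
  shows "A = B"
proof
  fix x
  have "A x \<bullet> y = B x \<bullet> y" for y
  proof -
    have "A x \<bullet> y = A (B x) \<bullet> y" by (simp add: assms(3))
    also have "\<dots> = x \<bullet> B (A y)" by (simp add: assms(1,2))
    also have "\<dots> = B x \<bullet> y" by (simp add: assms(2,4))
    finally show ?thesis .
  qed
  then show "A x = B x"
    by (metis vector_eq_rdot)
qed

lemma mp_pinv_unique:
  assumes P: "is_mp_pinv L P" and Q: "is_mp_pinv L Q"
  shows "P = Q"
proof -
  have P': "\<And>v. L (P (L v)) = L v" "\<And>w. P (L (P w)) = P w"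
    "\<And>x y. L (P x) \<bullet> y = x \<bullet> L (P y)" "\<And>x y. P (L x) \<bullet> y = x \<bullet> P (L y)"
    using P unfolding is_mp_pinv_def sym_psd_def by (auto simp: fun_eq_iff)
  have Q': "\<And>v. L (Q (L v)) = L v" "\<And>w. Q (L (Q w)) = Q w"
    "\<And>x y. L (Q x) \<bullet> y = x \<bullet> L (Q y)" "\<And>x y. Q (L x) \<bullet> y = x \<bullet> Q (L y)"
    using Q unfolding is_mp_pinv_def sym_psd_def by (auto simp: fun_eq_iff)
  have LP_LQ: "L \<circ> P = L \<circ> Q"
    by (rule symmetric_eq_of_same_range) (simp_all add: P' Q')
  have PL_QL: "P \<circ> L = Q \<circ> L"
    by (rule symmetric_eq_of_same_kernel) (simp_all add: P' Q')
  show ?thesis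
  proof
    fix x
    have "P x = P (L (P x))" by (simp add: P'(2))
    also have "\<dots> = Q (L (Q x))" by (metis comp_apply LP_LQ PL_QL)
    also have "\<dots> = Q x" by (simp add: Q'(2))
    finally show "P x = Q x" .
  qed
qed

lemma is_mp_pinv_mp_pinv:
  fixes L :: "'v::euclidean_space \<Rightarrow> 'w::euclidean_space"
  assumes "linear L"
  shows "is_mp_pinv L (mp_pinv L)"
  using mp_pinv_exists[OF assms] mp_pinv_unique unfolding mp_pinv_def by (metis theI)

lemma adjoint_mp_pinv_adjoint:
  fixes L :: "'v::euclidean_space \<Rightarrow> 'w::euclidean_space"
  assumes "linear L" "is_mp_pinv L P"
  shows "adjoint P (adjoint L x) = L (P x)"
proof -
  have "linear P" "\<And>x y. L (P x) \<bullet> y = x \<bullet> L (P y)"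
    using assms(2) unfolding is_mp_pinv_def sym_psd_def by auto
  then have "z \<bullet> adjoint P (adjoint L x) = z \<bullet> L (P x)" for z
    by (simp add: adjoint_clauses(1)[OF \<open>linear P\<close>] adjoint_clauses(1)[OF assms(1)])
  then show ?thesis
    by (metis vector_eq_ldot)
qed

lemma adjoint_diff_comp_mp_pinv_eq_0:
  fixes L :: "'v::euclidean_space \<Rightarrow> 'w::euclidean_space"
  assumes "linear L" "is_mp_pinv L P"
  shows "adjoint L (x - L (P x)) = 0"
proof -
  have LPL: "\<And>v. L (P (L v)) = L v" and sym: "\<And>x y. L (P x) \<bullet> y = x \<bullet> L (P y)"
    using assms(2) unfolding is_mp_pinv_def sym_psd_def by (auto simp: fun_eq_iff)
  have "z \<bullet> adjoint L (x - L (P x)) = L z \<bullet> x - L (P (L z)) \<bullet> x" for z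
    by (simp add: adjoint_clauses(1)[OF assms(1)] inner_diff_right sym)
  then show ?thesis
    by (metis LPL diff_self inner_eq_zero_iff)
qed

lemma mp_pinv_right_inverse_on_range:
  assumes "is_mp_pinv L P" "w \<in> range L"
  shows "L (P w) = w"
proof -
  obtain v where "w = L v"
    using assms(2) by blast
  moreover have "(L \<circ> P \<circ> L) v = L v"
    using assms(1) unfolding is_mp_pinv_def by simp
  ultimately show ?thesis by simp
qed

lemma independent_ofD:
  assumes "independent_of W1 W2 G" "w1 \<in> W1" "w2 \<in> W2"
  shows "G (w1 + w2) = G w2"
  using assms unfolding independent_of_def by blast

theorem mainTheorem9:
  fixes L :: "'v::euclidean_space \<Rightarrow> 'w::euclidean_space"
    and G :: "'w \<Rightarrow> 'w"
  assumes "linear L"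
    and "independent_of {x. adjoint L x = 0} (range (adjoint (mp_pinv L))) G"
    and "range G \<subseteq> range L"
  shows "(\<exists>F :: 'v \<Rightarrow> 'v. \<forall>x. G x = L (F (adjoint L x)))
     \<and> (let F = (\<lambda>y. mp_pinv L (G (adjoint (mp_pinv L) y))) in \<forall>x. G x = L (F (adjoint L x)))"
proof -
  define P where "P = mp_pinv L"
  define F where "F = (\<lambda>y. P (G (adjoint P y)))"
  have P: "is_mp_pinv L P"
    unfolding P_def using assms(1) by (rule is_mp_pinv_mp_pinv)
  have "G x = L (F (adjoint L x))" for x
  proof -
    have "G x = G ((x - L (P x)) + adjoint P (adjoint L x))"
      by (simp add: adjoint_mp_pinv_adjoint[OF assms(1) P])
    also have "\<dots> = G (adjoint P (adjoint L x))"
      by (rule independent_ofD[OF assms(2)[folded P_def]])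
        (simp_all add: adjoint_diff_comp_mp_pinv_eq_0[OF assms(1) P])
    also have "\<dots> = L (F (adjoint L x))"
      unfolding F_def
      by (rule mp_pinv_right_inverse_on_range[OF P range_subsetD[OF assms(3)], symmetric])
    finally show ?thesis .
  qed
  then show ?thesis
    unfolding P_def[symmetric] F_def[symmetric] Let_def by blast
qed

end
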